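(* Let $\mathcal{Y}=\{1,\dots,K\}$, let $f:\mathcal{X}\to\Delta_K$ be a fixed probabilistic predictor, and let $\Delta_K=B_1\cup\cdots\cup B_M$ be a partition into disjoint bins, $\mathcal{M}=\{1,\dots,M\}$, with bin-mapping $g:\mathcal{X}\to\mathcal{M}$, $g(x)=m$ iff $f(x)\in B_m$. Let $(X_1,Y_1),\dots,(X_n,Y_n)$ be i.i.d. from a distribution $P$ on $\mathcal{X}\times\mathcal{Y}$, and let $(X,Y)\sim P$ be independent of them. For $m\in\mathcal{M}$ and $y\in\mathcal{Y}$ let $\pi^P_{y,m}=\mathbb{P}(Y=y\mid f(X)\in B_m)$, $N_m=|\{i: f(X_i)\in B_m\}|$, $\widehat{\pi}^P_{y,m}=\frac1{N_m}\sum_{i=1}^n\mathbf{1}\{Y_i=y,f(X_i)\in B_m\}$, and write $\pi^P_m=(\pi^P_{1,m},\dots,\pi^P_{K,m})^\top$, $\widehat{\pi}^P_m=(\widehat{\pi}^P_{1,m},\dots,\widehat{\pi}^P_{K,m})^\top$. Let $h:\mathcal{X}\to\Delta_K$, $h(x)=\widehat{\pi}^P_{g(x)}$. Fix $\alpha\in(0,1)$ and set $$\varepsilon_m=\frac{2}{\sqrt{N_m}}\sqrt{\frac12\ln\Big(\frac{M2^K}{\alpha}\Big)}.$$ Then with probability at least $1-\alpha$ (over the calibration data), $\|\widehat{\pi}^P_m-\pi^P_m\|_1\le\varepsilon_m$ simultaneously for all $m\in\mathcal{M}$. As a consequence, with probability at least $1-\alpha$, $$\sum_{y=1}^K\big|\mathbb{P}(Y=y\mid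 h(X)=z)-z_y\big|\le\max_{m\in\mathcal{M}}\varepsilon_m$$ simultaneously for all $z$ in the range of $h$.
   Context: $\Delta_K$ denotes the probability simplex in $\mathbb{R}^K$, and $z_y$ is the $y$-th coordinate of $z\in\Delta_K$. *)

theory Defs
  imports "HOL-Probability.Probability"
begin

definition prob_simplex :: "nat \<Rightarrow> (nat \<Rightarrow> real) set" where
  "prob_simplex K = {z. (\<forall>i. 0 \<le> z i) \<and> (\<forall>i. i \<notin> {1..K} \<longrightarrow> z i = 0) \<and> (\<Sum>i=1..K. z i) = 1}"

definition bin_count :: "('x \<Rightarrow> nat) \<Rightarrow> nat \<Rightarrow> (nat \<Rightarrow> 'x \<times> nat) \<Rightarrow> nat \<Rightarrow> nat" where
  "bin_count g n \<omega> m = card {i\<in>{1..n}. g (fst (\<omega> i)) = m}"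

definition pi_hat :: "('x \<Rightarrow> nat) \<Rightarrow> nat \<Rightarrow> nat \<Rightarrow> (nat \<Rightarrow> 'x \<times> nat) \<Rightarrow> nat \<Rightarrow> nat \<Rightarrow> real" where
  "pi_hat g K n \<omega> m = (\<lambda>y. if y \<in> {1..K} then
      real (card {i\<in>{1..n}. snd (\<omega> i) = y \<and> g (fst (\<omega> i)) = m}) / real (bin_count g n \<omega> m)
    else 0)"

definition pi_true :: "('x \<times> nat) measure \<Rightarrow> ('x \<Rightarrow> nat) \<Rightarrow> nat \<Rightarrow> nat \<Rightarrow> nat \<Rightarrow> real" where
  "pi_true P g K m = (\<lambda>y. if y \<in> {1..K} then
      measure P {p\<in>space P. snd p = y \<and> g (fst p) = m} / measure P {p\<in>space P. g (fst p) = m}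
    else 0)"

definition recal :: "('x \<Rightarrow> nat) \<Rightarrow> nat \<Rightarrow> nat \<Rightarrow> (nat \<Rightarrow> 'x \<times> nat) \<Rightarrow> 'x \<Rightarrow> nat \<Rightarrow> real" where
  "recal g K n \<omega> x = pi_hat g K n \<omega> (g x)"

text \<open>epsilon_m as a function of N_m (only used when N_m > 0).\<close>
definition eps :: "nat \<Rightarrow> nat \<Rightarrow> real \<Rightarrow> nat \<Rightarrow> real" where
  "eps M K \<alpha> N = 2 / sqrt (real N) * sqrt (1/2 * ln (real M * 2 ^ K / \<alpha>))"

definition l1dist :: "nat \<Rightarrow> (nat \<Rightarrow> real) \<Rightarrow> (nat \<Rightarrow> real) \<Rightarrow> real" where
  "l1dist K u v = (\<Sum>y=1..K. \<bar>u y - v y\<bar>)"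

end

theory Submission
  imports Defs
begin

text \<open>
  Fix a bin \<open>m\<close> and a set \<open>S\<close> of labels. Conditionally on the set \<open>J\<close> of sample indices
  falling into bin \<open>m\<close>, the labels at \<open>J\<close> are i.i.d. with \<open>P(Y \<in> S | bin m)\<close>, so a Chernoff
  bound with the \<open>J\<close>-dependent parameter \<open>\<lambda> = sqrt (8 L / |J|)\<close> shows that the number of
  \<open>S\<close>-labels exceeds its conditional mean by \<open>sqrt (|J| L / 2)\<close> with probability at most
  \<open>exp (-L)\<close>; averaging over \<open>J\<close> with the binomial weights \<open>q^|J| (1 - q)^(n - |J|)\<close> keeps this
  bound although the bin size \<open>N_m = |J|\<close> is random. The \<open>\<ell>\<^sub>1\<close> distance of two probability vectors is
  twice the largest excess \<open>\<Sum>y\<in>S. u y - v y\<close>, so a union bound over the \<open>2^K\<close> label sets and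
  the \<open>M\<close> bins with \<open>L = ln (M 2^K / \<alpha>)\<close> gives the first claim. For the second, the level set
  \<open>{h = z}\<close> is the union of the bins whose empirical vector is \<open>z\<close>; the conditional label
  distribution on it is a convex combination of their true vectors, each within \<open>\<epsilon>\<^sub>m\<close> of \<open>z\<close>.
\<close>

lemma bernoulli_mgf_le:
  fixes p l :: real
  assumes "0 \<le> p" "p \<le> 1" "0 \<le> l"
  shows "p * exp (l * (1 - p)) + (1 - p) * exp (- l * p) \<le> exp (l\<^sup>2 / 8)"
proof -
  have pos: "0 < 1 + p * (exp l - 1)"
    using assms by (intro add_pos_nonneg mult_nonneg_nonneg) auto
  have "p * exp (l * (1 - p)) + (1 - p) * exp (- l * p) = exp (- l * p + ln (1 + p * (exp l - 1)))"
    using pos by (simp add: exp_add exp_diff exp_minus field_simps)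
  also have "\<dots> \<le> exp (l\<^sup>2 / 8)"
    using Hoeffdings_lemma_aux[of l p] assms by simp
  finally show ?thesis .
qed

lemma sum_Pow_binomial_weights:
  fixes q :: "'a::comm_ring_1"
  assumes "finite I"
  shows "(\<Sum>J\<in>Pow I. q ^ card J * (1 - q) ^ (card I - card J)) = 1"
proof -
  have "(\<Prod>i\<in>I. q + (1 - q)) = (\<Sum>J\<in>Pow I. q ^ card J * (1 - q) ^ (card I - card J))"
    using assms by (subst prod_add) (auto intro!: sum.cong simp: card_Diff_subset finite_subset)
  then show ?thesis by simp
qed

lemma sum_abs_diff_eq_twice_excess:
  fixes u v :: "'a \<Rightarrow> real"
  assumes "finite A" "sum u A = sum v A"
  defines "S \<equiv> {y\<in>A. v y \<le> u y}"
  shows "(\<Sum>y\<in>A. \<bar>u y - v y\<bar>) = 2 * (\<Sum>y\<in>S. u y - v y)"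
proof -
  have "A \<inter> S = S"
    by (auto simp: S_def)
  then have split: "sum h A = sum h S + sum h (A - S)" for h :: "'a \<Rightarrow> real"
    using sum.Int_Diff[OF assms(1), of h S] by simp
  have "(\<Sum>y\<in>A - S. v y - u y) = (\<Sum>y\<in>S. u y - v y)"
    using split[of u] split[of v] assms(2) by (simp add: sum_subtractf)
  moreover have "(\<Sum>y\<in>A. \<bar>u y - v y\<bar>) = (\<Sum>y\<in>S. u y - v y) + (\<Sum>y\<in>A - S. v y - u y)"
    unfolding split[of "\<lambda>y. \<bar>u y - v y\<bar>"]
    by (intro arg_cong2[where f = "(+)"] sum.cong) (auto simp: S_def)
  ultimately show ?thesis by simp
qed

lemma sum_abs_mixture_diff_le:
  fixes v :: "'m \<Rightarrow> 'a \<Rightarrow> real" and z :: "'a \<Rightarrow> real"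
  assumes "finite T" "\<And>m. m \<in> T \<Longrightarrow> 0 \<le> w m" "sum w T = 1"
    and "\<And>m. m \<in> T \<Longrightarrow> (\<Sum>y\<in>Y. \<bar>v m y - z y\<bar>) \<le> e"
  shows "(\<Sum>y\<in>Y. \<bar>(\<Sum>m\<in>T. w m * v m y) - z y\<bar>) \<le> e"
proof -
  have "(\<Sum>y\<in>Y. \<bar>(\<Sum>m\<in>T. w m * v m y) - z y\<bar>) = (\<Sum>y\<in>Y. \<bar>\<Sum>m\<in>T. w m * (v m y - z y)\<bar>)"
    using assms(3) by (simp add: right_diff_distrib sum_subtractf flip: sum_distrib_right)
  also have "\<dots> \<le> (\<Sum>y\<in>Y. \<Sum>m\<in>T. w m * \<bar>v m y - z y\<bar>)"
    by (intro sum_mono order.trans[OF sum_abs] eq_refl sum.cong) (simp_all add: abs_mult assms(2))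
  also have "\<dots> = (\<Sum>m\<in>T. w m * (\<Sum>y\<in>Y. \<bar>v m y - z y\<bar>))"
    by (subst sum.swap) (simp add: sum_distrib_left)
  also have "\<dots> \<le> (\<Sum>m\<in>T. w m * e)"
    by (intro sum_mono mult_left_mono) (use assms in auto)
  also have "\<dots> = e"
    using assms(3) by (simp flip: sum_distrib_right)
  finally show ?thesis .
qed

lemma sets_Collect_invariant_count_space:
  assumes h: "h \<in> M \<rightarrow>\<^sub>M count_space A" and R: "\<And>x y. h x = h y \<Longrightarrow> R x \<Longrightarrow> R y"
  shows "{x\<in>space M. R x} \<in> sets M"
proof -
  let ?S = "{x\<in>space M. R x}"
  have "h ` ?S \<subseteq> A"
    using measurable_space[OF h] by auto
  then have "h -` (h ` ?S) \<inter> space M \<in> sets M"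
    by (intro measurable_sets[OF h]) simp
  moreover have "h -` (h ` ?S) \<inter> space M \<subseteq> ?S"
  proof
    fix x assume "x \<in> h -` (h ` ?S) \<inter> space M"
    then obtain y where "R y" "h y = h x" "x \<in> space M"
      by auto
    then show "x \<in> ?S"
      using R by blast
  qed
  then have "h -` (h ` ?S) \<inter> space M = ?S"
    by blast
  ultimately show ?thesis
    by simp
qed

lemma (in finite_measure) measure_Collect_mem_eq_sum:
  assumes "finite T" "\<And>t. t \<in> T \<Longrightarrow> {x\<in>space M. f x = t \<and> R x} \<in> sets M"
  shows "measure M {x\<in>space M. f x \<in> T \<and> R x} = (\<Sum>t\<in>T. measure M {x\<in>space M. f x = t \<and> R x})"
proof -
  have "measure M (\<Union>t\<in>T. {x\<in>space M. f x = t \<and> R x}) = (\<Sum>t\<in>T. measure M {x\<in>space M. f x = t \<and> R x})"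
    using assms by (intro measure_finite_Union) (auto simp: disjoint_family_on_def)
  moreover have "(\<Union>t\<in>T. {x\<in>space M. f x = t \<and> R x}) = {x\<in>space M. f x \<in> T \<and> R x}"
    by auto
  ultimately show ?thesis
    by simp
qed

lemma prod_excess_exp_eq:
  fixes A C :: "'a set" and l p :: real
  assumes "finite I" "C \<subseteq> A"
  shows "(\<Prod>i\<in>I. if i \<in> {i\<in>I. \<omega> i \<in> A}
                   then indicator A (\<omega> i) * exp (l * (indicator C (\<omega> i) - p))
                   else 1 - indicator A (\<omega> i))
       = exp (l * (card {i\<in>I. \<omega> i \<in> C} - card {i\<in>I. \<omega> i \<in> A} * p))"
proof -
  let ?J = "{i\<in>I. \<omega> i \<in> A}"
  have C_in_J: "?J \<inter> {i. \<omega> i \<in> C} = {i\<in>I. \<omega> i \<in> C}"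
    using assms(2) by auto
  have count_C: "(\<Sum>i\<in>?J. indicator C (\<omega> i) :: real) = card {i\<in>I. \<omega> i \<in> C}"
    using assms(1) by (simp add: indicator_def C_in_J)
  have "(\<Prod>i\<in>I. if i \<in> ?J then indicator A (\<omega> i) * exp (l * (indicator C (\<omega> i) - p))
                   else 1 - indicator A (\<omega> i))
      = (\<Prod>i\<in>?J. exp (l * (indicator C (\<omega> i) - p)))"
    using assms(1) by (subst prod.If_cases) (auto intro!: prod.neutral prod.cong)
  also have "\<dots> = exp (\<Sum>i\<in>?J. l * (indicator C (\<omega> i) - p))"
    using assms(1) by (simp add: exp_sum)
  also have "\<dots> = exp (l * (card {i\<in>I. \<omega> i \<in> C} - card ?J * p))"
    by (simp add: count_C sum_distrib_left[symmetric] sum_subtractf)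
  finally show ?thesis .
qed

lemma two_sqrt_half_div_eq:
  fixes N L :: real
  assumes "0 < N"
  shows "2 * sqrt (N * L / 2) / N = 2 / sqrt N * sqrt (1/2 * L)"
proof -
  have "sqrt (N * L / 2) = sqrt N * sqrt (1/2 * L)"
    by (simp flip: real_sqrt_mult)
  moreover have "N = sqrt N * sqrt N"
    using assms by simp
  ultimately show ?thesis
    using assms by (simp add: field_simps)
qed

section \<open>Chernoff bound for the label frequencies in a bin\<close>

lemma indicator_mult_exp_excess_eq:
  fixes l p :: real
  assumes "C \<subseteq> A"
  shows "indicator A x * exp (l * (indicator C x - p))
       = exp (l * (1 - p)) * indicator C x + exp (- l * p) * indicator (A - C) x"
  using assms by (auto simp: indicator_def)

text \<open>
  The indicator factors make the term vanish unless the indices \<open>i\<close> with \<open>\<omega> i \<in> A\<close> are exactly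
  \<open>J\<close>; there it is the Chernoff exponential with parameter \<open>\<lambda> = sqrt (8 L / |J|)\<close>, the optimal one
  for a deviation of \<open>sqrt (|J| L / 2)\<close>, for which \<open>\<lambda> sqrt (|J| L / 2) = 2 L\<close>.
\<close>

definition chernoff_term :: "'i set \<Rightarrow> 'a set \<Rightarrow> 'a set \<Rightarrow> real \<Rightarrow> real \<Rightarrow> 'i set \<Rightarrow> ('i \<Rightarrow> 'a) \<Rightarrow> real"
  where "chernoff_term I A C L p J \<omega> = exp (- 2 * L) * (\<Prod>i\<in>I. if i \<in> J
            then indicator A (\<omega> i) * exp (sqrt (8 * L / card J) * (indicator C (\<omega> i) - p))
            else 1 - indicator A (\<omega> i))"

lemma chernoff_term_nonneg: "0 \<le> chernoff_term I A C L p J \<omega>"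
  unfolding chernoff_term_def by (intro mult_nonneg_nonneg prod_nonneg) (auto simp: indicator_def)

lemma one_le_chernoff_term:
  fixes A C :: "'a set" and L p :: real
  assumes "finite I" "C \<subseteq> A" "0 \<le> L" and N: "0 < card {i\<in>I. \<omega> i \<in> A}"
    and dev: "sqrt (card {i\<in>I. \<omega> i \<in> A} * L / 2) \<le> card {i\<in>I. \<omega> i \<in> C} - card {i\<in>I. \<omega> i \<in> A} * p"
  shows "1 \<le> chernoff_term I A C L p {i\<in>I. \<omega> i \<in> A} \<omega>"
proof -
  let ?J = "{i\<in>I. \<omega> i \<in> A}"
  let ?l = "sqrt (8 * L / card ?J)"
  have "?l * sqrt (card ?J * L / 2) = sqrt ((2 * L)\<^sup>2)"
    using N by (simp add: real_sqrt_mult[symmetric] power2_eq_square field_simps)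
  also have "\<dots> = 2 * L"
    by (simp only: real_sqrt_abs) (use assms(3) in simp)
  finally have "?l * sqrt (card ?J * L / 2) = 2 * L" .
  moreover have "?l * sqrt (card ?J * L / 2) \<le> ?l * (card {i\<in>I. \<omega> i \<in> C} - card ?J * p)"
    using dev assms(3) by (intro mult_left_mono) simp_all
  ultimately have "2 * L \<le> ?l * (card {i\<in>I. \<omega> i \<in> C} - card ?J * p)"
    by simp
  then show ?thesis
    unfolding chernoff_term_def prod_excess_exp_eq[OF assms(1,2)] by (simp add: mult_exp_exp)
qed

context prob_space
begin

lemma AE_PiM_avoids_null_event:
  assumes "finite I" "A \<in> events" "prob A = 0"
  shows "AE \<omega> in PiM I (\<lambda>_. M). \<forall>i\<in>I. \<omega> i \<notin> A"
proof -
  have "AE x in M. x \<notin> A"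
    using assms(2,3) by (intro AE_not_in null_setsI) (simp_all add: emeasure_eq_measure)
  then show ?thesis
    using assms(1) by (intro eventually_ball_finite ballI AE_PiM_component) (auto intro: prob_space_axioms)
qed

lemma integral_PiM_prod_if:
  fixes a b :: "'a \<Rightarrow> real"
  assumes "finite I" "J \<subseteq> I" "integrable M a" "integrable M b"
  shows "(\<integral>\<omega>. (\<Prod>i\<in>I. if i \<in> J then a (\<omega> i) else b (\<omega> i)) \<partial>PiM I (\<lambda>_. M))
       = (\<integral>x. a x \<partial>M) ^ card J * (\<integral>x. b x \<partial>M) ^ (card I - card J)"
proof -
  interpret product_sigma_finite "\<lambda>_. M"
    by (simp add: product_sigma_finite_def prob_space_imp_sigma_finite prob_space_axioms)
  have "(\<integral>\<omega>. (\<Prod>i\<in>I. if i \<in> J then a (\<omega> i) else b (\<omega> i)) \<partial>PiM I (\<lambda>_. M))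
      = (\<Prod>i\<in>I. if i \<in> J then (\<integral>x. a x \<partial>M) else (\<integral>x. b x \<partial>M))"
    using product_integral_prod[of I "\<lambda>i. if i \<in> J then a else b"] assms
    by (simp add: if_distrib if_distribR)
  also have "\<dots> = (\<integral>x. a x \<partial>M) ^ card J * (\<integral>x. b x \<partial>M) ^ (card I - card J)"
    using assms(1,2) by (simp add: prod.If_cases Int_absorb1 Diff_eq[symmetric] card_Diff_subset finite_subset)
  finally show ?thesis .
qed

lemma integral_indicator_exp_excess_le:
  assumes "A \<in> events" "C \<in> events" "C \<subseteq> A" "0 < prob A" "0 \<le> l"
  defines "p \<equiv> prob C / prob A"
  shows "(\<integral>x. indicator A x * exp (l * (indicator C x - p)) \<partial>M) \<le> prob A * exp (l\<^sup>2 / 8)"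
proof -
  have p: "0 \<le> p" "p \<le> 1"
    using finite_measure_mono[OF assms(3,1)] assms(4) by (auto simp: p_def)
  have "(\<integral>x. indicator A x * exp (l * (indicator C x - p)) \<partial>M)
      = (\<integral>x. exp (l * (1 - p)) * indicator C x + exp (- l * p) * indicator (A - C) x \<partial>M)"
    by (simp add: indicator_mult_exp_excess_eq[OF assms(3)])
  also have "\<dots> = exp (l * (1 - p)) * prob C + exp (- l * p) * (prob A - prob C)"
    using assms(1-3) by (subst Bochner_Integration.integral_add)
      (auto simp: finite_measure_Diff emeasure_eq_measure Int_absorb2)
  also have "\<dots> = prob A * (p * exp (l * (1 - p)) + (1 - p) * exp (- l * p))"
    using assms(4) by (simp add: p_def field_simps)
  also have "\<dots> \<le> prob A * exp (l\<^sup>2 / 8)"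
    using bernoulli_mgf_le[OF p assms(5)] by (intro mult_left_mono) auto
  finally show ?thesis .
qed

lemma integrable_chernoff_term:
  assumes "finite I" "A \<in> events" "C \<in> events" "C \<subseteq> A"
  shows "integrable (PiM I (\<lambda>_. M)) (chernoff_term I A C L p J)"
proof -
  interpret product_sigma_finite "\<lambda>_. M"
    by (simp add: product_sigma_finite_def prob_space_imp_sigma_finite prob_space_axioms)
  have "integrable M (\<lambda>x. if b then indicator A x * exp (l * (indicator C x - p)) else 1 - indicator A x)"
    for b and l :: real
    using assms(2-4) by (cases b) (simp_all add: indicator_mult_exp_excess_eq emeasure_eq_measure)
  then show ?thesis
    unfolding chernoff_term_def[abs_def] using assms(1)
    by (intro integrable_mult_right product_integrable_prod[where f = "\<lambda>i x. if i \<in> J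
      then indicator A x * exp (sqrt (8 * L / card J) * (indicator C x - p)) else 1 - indicator A x"])
qed

lemma integral_chernoff_term_le:
  fixes A C :: "'a set" and L :: real
  assumes "finite I" "J \<subseteq> I" "J \<noteq> {}" "A \<in> events" "C \<in> events" "C \<subseteq> A" "0 < prob A" "0 \<le> L"
  defines "p \<equiv> prob C / prob A"
  shows "(\<integral>\<omega>. chernoff_term I A C L p J \<omega> \<partial>PiM I (\<lambda>_. M))
         \<le> exp (- L) * (prob A ^ card J * (1 - prob A) ^ (card I - card J))"
proof -
  define l where "l = sqrt (8 * L / card J)"
  let ?a = "\<lambda>x. indicator A x * exp (l * (indicator C x - p))"
  have k: "0 < card J"
    using assms(1-3) by (simp add: card_gt_0_iff finite_subset)
  have int_a: "integrable M ?a" and int_b: "integrable M (\<lambda>x. 1 - indicator A x :: real)"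
    using assms(4-6) by (simp_all add: indicator_mult_exp_excess_eq emeasure_eq_measure)
  have "0 \<le> l"
    using assms(8) by (simp add: l_def)
  from integral_indicator_exp_excess_le[OF assms(4-7) this]
  have a_le: "(\<integral>x. ?a x \<partial>M) \<le> prob A * exp (l\<^sup>2 / 8)"
    unfolding p_def .
  have b_eq: "(\<integral>x. 1 - indicator A x \<partial>M) = 1 - prob A"
    using assms(4) by (subst Bochner_Integration.integral_diff) (auto simp: emeasure_eq_measure Int_absorb2 prob_space)
  have exp_pow: "exp (l\<^sup>2 / 8) ^ card J = exp L"
    using k assms(8) by (simp add: l_def exp_of_nat_mult[symmetric])
  have "(\<integral>\<omega>. chernoff_term I A C L p J \<omega> \<partial>PiM I (\<lambda>_. M))
      = exp (- 2 * L) * (\<integral>x. ?a x \<partial>M) ^ card J * (1 - prob A) ^ (card I - card J)"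
    using integral_PiM_prod_if[OF assms(1,2) int_a int_b] unfolding chernoff_term_def l_def
    by (simp add: b_eq)
  also have "\<dots> \<le> exp (- 2 * L) * (prob A * exp (l\<^sup>2 / 8)) ^ card J * (1 - prob A) ^ (card I - card J)"
    using a_le by (intro mult_right_mono mult_left_mono power_mono integral_nonneg) auto
  also have "\<dots> = exp (- L) * (prob A ^ card J * (1 - prob A) ^ (card I - card J))"
    using exp_pow by (simp add: power_mult_distrib mult_exp_exp)
  finally show ?thesis .
qed

lemma prob_PiM_frequency_excess_ge:
  fixes A C :: "'a set" and L :: real
  assumes "finite I" "A \<in> events" "C \<in> events" "C \<subseteq> A" "0 < prob A" "0 \<le> L"
  defines "p \<equiv> prob C / prob A"
  shows "measure (PiM I (\<lambda>_. M)) {\<omega> \<in> space (PiM I (\<lambda>_. M)). 0 < card {i\<in>I. \<omega> i \<in> A} \<and>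
           sqrt (real (card {i\<in>I. \<omega> i \<in> A}) * L / 2)
             \<le> real (card {i\<in>I. \<omega> i \<in> C}) - real (card {i\<in>I. \<omega> i \<in> A}) * p}
         \<le> exp (- L)"
proof -
  let ?Q = "PiM I (\<lambda>_. M)"
  interpret Q: prob_space ?Q
    by (intro prob_space_PiM prob_space_axioms)
  define F where "F \<omega> = (\<Sum>J\<in>Pow I - {{}}. chernoff_term I A C L p J \<omega>)" for \<omega>
  have F_int: "integrable ?Q F"
    unfolding F_def[abs_def] using integrable_chernoff_term[OF assms(1-4)]
    by (intro Bochner_Integration.integrable_sum)
  have "1 \<le> F \<omega>"
    if N: "0 < card {i\<in>I. \<omega> i \<in> A}"
      and "sqrt (card {i\<in>I. \<omega> i \<in> A} * L / 2) \<le> card {i\<in>I. \<omega> i \<in> C} - card {i\<in>I. \<omega> i \<in> A} * p"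
    for \<omega>
  proof -
    have "1 \<le> chernoff_term I A C L p {i\<in>I. \<omega> i \<in> A} \<omega>"
      using one_le_chernoff_term[OF assms(1,4,6)] that .
    also have "\<dots> \<le> F \<omega>"
      unfolding F_def using N assms(1)
      by (intro member_le_sum) (auto simp: card_gt_0_iff chernoff_term_nonneg)
    finally show ?thesis .
  qed
  then have "measure ?Q {\<omega> \<in> space ?Q. 0 < card {i\<in>I. \<omega> i \<in> A} \<and>
           sqrt (card {i\<in>I. \<omega> i \<in> A} * L / 2) \<le> card {i\<in>I. \<omega> i \<in> C} - card {i\<in>I. \<omega> i \<in> A} * p}
      \<le> measure ?Q {\<omega> \<in> space ?Q. 1 \<le> F \<omega>}"
    using borel_measurable_integrable[OF F_int] by (intro Q.finite_measure_mono) auto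
  also have "\<dots> \<le> (\<integral>\<omega>. F \<omega> \<partial>?Q)"
    using integral_Markov_inequality_measure[OF F_int, of "space ?Q" 1]
    by (simp add: F_def sum_nonneg chernoff_term_nonneg)
  also have "\<dots> = (\<Sum>J\<in>Pow I - {{}}. \<integral>\<omega>. chernoff_term I A C L p J \<omega> \<partial>?Q)"
    unfolding F_def using integrable_chernoff_term[OF assms(1-4)] by (intro Bochner_Integration.integral_sum)
  also have "\<dots> \<le> (\<Sum>J\<in>Pow I - {{}}. exp (- L) * (prob A ^ card J * (1 - prob A) ^ (card I - card J)))"
    unfolding p_def using integral_chernoff_term_le[OF assms(1) _ _ assms(2-6)] by (intro sum_mono) auto
  also have "\<dots> \<le> exp (- L) * (\<Sum>J\<in>Pow I. prob A ^ card J * (1 - prob A) ^ (card I - card J))"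
    unfolding sum_distrib_left using assms(1) prob_le_1[of A]
    by (intro sum_mono2 mult_nonneg_nonneg zero_le_power) auto
  also have "\<dots> = exp (- L)"
    using sum_Pow_binomial_weights[OF assms(1)] by simp
  finally show ?thesis .
qed

end

section \<open>Histogram binning\<close>

locale histogram_binning = P: prob_space P
  for P :: "('x \<times> nat) measure" +
  fixes MX :: "'x measure" and g :: "'x \<Rightarrow> nat" and K M n :: nat and \<alpha> :: real
  assumes sets_P: "sets P = sets (MX \<Otimes>\<^sub>M count_space {1..K})"
    and bin_index_range: "x \<in> space MX \<Longrightarrow> g x \<in> {1..M}"
    and bin_index_measurable: "g \<in> MX \<rightarrow>\<^sub>M count_space UNIV"
    and M_pos: "1 \<le> M" and alpha: "0 < \<alpha>" "\<alpha> < 1"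
begin

abbreviation Q :: "(nat \<Rightarrow> 'x \<times> nat) measure" where
  "Q \<equiv> PiM {1..n} (\<lambda>_. P)"

abbreviation bin_prob :: "nat \<Rightarrow> real" where
  "bin_prob m \<equiv> measure P {p\<in>space P. g (fst p) = m}"

sublocale Q: prob_space Q
  by (intro prob_space_PiM P.prob_space_axioms)

definition labels :: "(nat \<Rightarrow> 'x \<times> nat) \<Rightarrow> nat \<Rightarrow> nat \<times> nat" where
  "labels \<omega> = (\<lambda>i\<in>{1..n}. (g (fst (\<omega> i)), snd (\<omega> i)))"

definition label_count :: "(nat \<Rightarrow> 'x \<times> nat) \<Rightarrow> nat \<Rightarrow> nat set \<Rightarrow> nat" where
  "label_count \<omega> m S = card {i\<in>{1..n}. snd (\<omega> i) \<in> S \<and> g (fst (\<omega> i)) = m}"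

definition label_prob :: "nat \<Rightarrow> nat set \<Rightarrow> real" where
  "label_prob m S = measure P {p\<in>space P. snd p \<in> S \<and> g (fst p) = m} / bin_prob m"

lemma space_P: "space P = space MX \<times> {1..K}"
  using sets_eq_imp_space_eq[OF sets_P] by (simp add: space_pair_measure)

lemma measurable_bin_label: "(\<lambda>p. (g (fst p), snd p)) \<in> P \<rightarrow>\<^sub>M count_space ({1..M} \<times> {1..K})"
proof (subst measurable_count_space_eq2_countable, safe)
  fix a b
  have "g -` {a} \<inter> space MX \<in> sets MX"
    using bin_index_measurable by (simp add: measurable_count_space_eq2_countable)
  moreover have "(\<lambda>p. (g (fst p), snd p)) -` {(a, b)} \<inter> space P = (g -` {a} \<inter> space MX) \<times> ({b} \<inter> {1..K})"
    by (auto simp: space_P)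
  ultimately show "(\<lambda>p. (g (fst p), snd p)) -` {(a, b)} \<inter> space P \<in> sets P"
    by (simp add: sets_P)
qed (auto simp: space_P dest: bin_index_range)

lemma sets_Collect_bin_label: "{p\<in>space P. R (g (fst p)) (snd p)} \<in> sets P"
proof -
  have "(\<lambda>p. (g (fst p), snd p)) -` {(a, y)\<in>{1..M} \<times> {1..K}. R a y} \<inter> space P \<in> sets P"
    by (intro measurable_sets[OF measurable_bin_label]) auto
  moreover have "(\<lambda>p. (g (fst p), snd p)) -` {(a, y)\<in>{1..M} \<times> {1..K}. R a y} \<inter> space P
      = {p\<in>space P. R (g (fst p)) (snd p)}"
    by (auto simp: space_P dest: bin_index_range)
  ultimately show ?thesis
    by simp
qed

lemma measurable_labels: "labels \<in> Q \<rightarrow>\<^sub>M count_space (PiE {1..n} (\<lambda>_. {1..M} \<times> {1..K}))"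
proof -
  have "(\<lambda>\<omega>. (g (fst (\<omega> i)), snd (\<omega> i))) \<in> Q \<rightarrow>\<^sub>M count_space ({1..M} \<times> {1..K})"
    if "i \<in> {1..n}" for i
    using measurable_compose[OF measurable_component_singleton[OF that] measurable_bin_label] by simp
  then have "labels \<in> Q \<rightarrow>\<^sub>M PiM {1..n} (\<lambda>_. count_space ({1..M} \<times> {1..K}))"
    unfolding labels_def by (rule measurable_restrict)
  also have "PiM {1..n} (\<lambda>_. count_space ({1..M} \<times> {1..K})) = count_space (PiE {1..n} (\<lambda>_. {1..M} \<times> {1..K}))"
    by (intro count_space_PiM_finite) auto
  finally show ?thesis .
qed

text \<open>
  All events below depend on the sample only through the finitely-valued statistic \<open>labels\<close>;
  this is what makes them measurable.
\<close>

lemma sets_Collect_label_invariant: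
  assumes "\<And>\<omega> \<omega>'. labels \<omega> = labels \<omega>' \<Longrightarrow> R \<omega> \<Longrightarrow> R \<omega>'"
  shows "{\<omega>\<in>space Q. R \<omega>} \<in> sets Q"
  using measurable_labels assms by (rule sets_Collect_invariant_count_space)

lemma Collect_sample_eq_if_labels_eq:
  assumes "labels \<omega> = labels \<omega>'"
  shows "{i\<in>{1..n}. Z (g (fst (\<omega> i))) (snd (\<omega> i))} = {i\<in>{1..n}. Z (g (fst (\<omega>' i))) (snd (\<omega>' i))}"
proof -
  have "g (fst (\<omega> i)) = g (fst (\<omega>' i)) \<and> snd (\<omega> i) = snd (\<omega>' i)" if "i \<in> {1..n}" for i
    using fun_cong[OF assms, of i] that by (simp add: labels_def)
  then show ?thesis
    by auto
qed

lemma bin_statistics_eq_if_labels_eq: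
  assumes "labels \<omega> = labels \<omega>'"
  shows "bin_count g n \<omega> = bin_count g n \<omega>'" and "label_count \<omega> = label_count \<omega>'"
    and "pi_hat g K n \<omega> = pi_hat g K n \<omega>'" and "recal g K n \<omega> = recal g K n \<omega>'"
proof -
  from Collect_sample_eq_if_labels_eq[OF assms, of "\<lambda>a _. a = _"]
    Collect_sample_eq_if_labels_eq[OF assms, of "\<lambda>a y. y \<in> _ \<and> a = _"]
    Collect_sample_eq_if_labels_eq[OF assms, of "\<lambda>a y. y = _ \<and> a = _"]
  show "bin_count g n \<omega> = bin_count g n \<omega>'" and "label_count \<omega> = label_count \<omega>'"
    and "pi_hat g K n \<omega> = pi_hat g K n \<omega>'"
    by (simp_all add: bin_count_def label_count_def pi_hat_def fun_eq_iff)
  then show "recal g K n \<omega> = recal g K n \<omega>'"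
    by (simp add: recal_def fun_eq_iff)
qed

lemma sets_Collect_bin_statistics:
  "{\<omega>\<in>space Q. R (bin_count g n \<omega>) (label_count \<omega>) (pi_hat g K n \<omega>) (recal g K n \<omega>)} \<in> sets Q"
proof (rule sets_Collect_label_invariant)
  fix \<omega> \<omega>' :: "nat \<Rightarrow> 'x \<times> nat"
  assume "labels \<omega> = labels \<omega>'"
    and "R (bin_count g n \<omega>) (label_count \<omega>) (pi_hat g K n \<omega>) (recal g K n \<omega>)"
  then show "R (bin_count g n \<omega>') (label_count \<omega>') (pi_hat g K n \<omega>') (recal g K n \<omega>')"
    using bin_statistics_eq_if_labels_eq[of \<omega> \<omega>'] by simp
qed

lemma sample_in_space:
  assumes "\<omega> \<in> space Q" "i \<in> {1..n}"
  shows "\<omega> i \<in> space P"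
  using PiE_mem[of \<omega> "{1..n}" "\<lambda>_. space P" i] assms by (simp add: space_PiM)

lemma sum_pi_hat:
  assumes "T \<subseteq> {1..K}"
  shows "(\<Sum>y\<in>T. pi_hat g K n \<omega> m y) = label_count \<omega> m T / bin_count g n \<omega> m"
proof -
  have "finite T"
    using assms finite_subset by blast
  have "(\<Sum>y\<in>T. card {i\<in>{1..n}. snd (\<omega> i) = y \<and> g (fst (\<omega> i)) = m})
      = card (\<Union>y\<in>T. {i\<in>{1..n}. snd (\<omega> i) = y \<and> g (fst (\<omega> i)) = m})"
    using \<open>finite T\<close> by (intro card_UN_disjoint[symmetric]) auto
  moreover have "(\<Union>y\<in>T. {i\<in>{1..n}. snd (\<omega> i) = y \<and> g (fst (\<omega> i)) = m})
      = {i\<in>{1..n}. snd (\<omega> i) \<in> T \<and> g (fst (\<omega> i)) = m}"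
    by auto
  ultimately show ?thesis
    using assms
    by (simp add: pi_hat_def label_count_def subset_iff sum_divide_distrib[symmetric] flip: of_nat_sum)
qed

lemma sum_pi_true:
  assumes "T \<subseteq> {1..K}"
  shows "(\<Sum>y\<in>T. pi_true P g K m y) = label_prob m T"
proof -
  have "finite T"
    using assms finite_subset by blast
  have "measure P {p\<in>space P. snd p \<in> T \<and> g (fst p) = m}
      = (\<Sum>y\<in>T. measure P {p\<in>space P. snd p = y \<and> g (fst p) = m})"
    using \<open>finite T\<close> sets_Collect_bin_label by (intro P.measure_Collect_mem_eq_sum)
  then show ?thesis
    using assms by (simp add: pi_true_def label_prob_def subset_iff sum_divide_distrib[symmetric])
qed

lemma l1dist_pi_hat_le:
  assumes \<omega>: "\<omega> \<in> space Q" and N: "0 < bin_count g n \<omega> m" and q: "0 < bin_prob m"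
    and dev: "\<And>S. S \<subseteq> {1..K} \<Longrightarrow> real (label_count \<omega> m S) - bin_count g n \<omega> m * label_prob m S \<le> t"
  shows "l1dist K (pi_hat g K n \<omega> m) (pi_true P g K m) \<le> 2 * t / bin_count g n \<omega> m"
proof -
  let ?u = "pi_hat g K n \<omega> m" and ?v = "pi_true P g K m"
  define S where "S = {y\<in>{1..K}. ?v y \<le> ?u y}"
  have S_sub: "S \<subseteq> {1..K}"
    by (auto simp: S_def)
  have "label_count \<omega> m {1..K} = bin_count g n \<omega> m"
    using sample_in_space[OF \<omega>] unfolding label_count_def bin_count_def
    by (auto simp: space_P mem_Times_iff intro!: arg_cong[where f = card])
  then have "sum ?u {1..K} = 1"
    using N by (simp add: sum_pi_hat)
  moreover have "{p\<in>space P. snd p \<in> {1..K} \<and> g (fst p) = m} = {p\<in>space P. g (fst p) = m}"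
    by (auto simp: space_P)
  then have "sum ?v {1..K} = 1"
    using q by (simp add: sum_pi_true label_prob_def)
  ultimately have "l1dist K ?u ?v = 2 * (sum ?u S - sum ?v S)"
    using sum_abs_diff_eq_twice_excess[of "{1..K}" ?u ?v] by (simp add: l1dist_def S_def sum_subtractf)
  also have "\<dots> = 2 * (label_count \<omega> m S - bin_count g n \<omega> m * label_prob m S) / bin_count g n \<omega> m"
    using N by (simp add: sum_pi_hat[OF S_sub] sum_pi_true[OF S_sub] field_simps)
  also have "\<dots> \<le> 2 * t / bin_count g n \<omega> m"
    using dev[OF S_sub] by (intro divide_right_mono) auto
  finally show ?thesis .
qed

definition deviation_event :: "real \<Rightarrow> nat \<Rightarrow> nat set \<Rightarrow> (nat \<Rightarrow> 'x \<times> nat) set" where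
  "deviation_event L m S = {\<omega>\<in>space Q. 0 < bin_count g n \<omega> m \<and>
     sqrt (real (bin_count g n \<omega> m) * L / 2)
       \<le> real (label_count \<omega> m S) - real (bin_count g n \<omega> m) * label_prob m S}"

lemma sets_deviation_event: "deviation_event L m S \<in> sets Q"
  using sets_Collect_bin_statistics[of "\<lambda>N C _ _. 0 < N m \<and>
     sqrt (real (N m) * L / 2) \<le> real (C m S) - real (N m) * label_prob m S"]
  by (simp add: deviation_event_def)

lemma prob_deviation_event_le:
  fixes L :: real
  assumes "0 < bin_prob m" "0 \<le> L"
  shows "measure Q (deviation_event L m S) \<le> exp (- L)"
proof -
  let ?A = "{p\<in>space P. g (fst p) = m}" and ?C = "{p\<in>space P. snd p \<in> S \<and> g (fst p) = m}"
  have "?A \<in> sets P" "?C \<in> sets P"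
    using sets_Collect_bin_label[of "\<lambda>a _. a = m"] sets_Collect_bin_label[of "\<lambda>a y. y \<in> S \<and> a = m"]
    by simp_all
  then have excess: "measure Q {\<omega>\<in>space Q. 0 < card {i\<in>{1..n}. \<omega> i \<in> ?A} \<and>
      sqrt (real (card {i\<in>{1..n}. \<omega> i \<in> ?A}) * L / 2)
        \<le> real (card {i\<in>{1..n}. \<omega> i \<in> ?C}) - real (card {i\<in>{1..n}. \<omega> i \<in> ?A}) * (P.prob ?C / P.prob ?A)}
    \<le> exp (- L)"
    using assms by (intro P.prob_PiM_frequency_excess_ge) auto
  have counts: "card {i\<in>{1..n}. \<omega> i \<in> ?A} = bin_count g n \<omega> m"
    "card {i\<in>{1..n}. \<omega> i \<in> ?C} = label_count \<omega> m S"
    if "\<omega> \<in> space Q" for \<omega>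
    using sample_in_space[OF that] unfolding bin_count_def label_count_def
    by (auto intro!: arg_cong[where f = card])
  show ?thesis
    using excess unfolding deviation_event_def label_prob_def by (simp only: counts cong: conj_cong)
qed

definition chernoff_level :: real where
  "chernoff_level = ln (M * 2 ^ K / \<alpha>)"

lemma chernoff_level_nonneg: "0 \<le> chernoff_level"
  and exp_neg_chernoff_level: "exp (- chernoff_level) = \<alpha> / (M * 2 ^ K)"
proof -
  have "\<alpha> < M * 2 ^ K"
    using alpha M_pos one_le_power[of "2::real" K] mult_mono[of 1 "real M" 1 "2 ^ K"] by simp
  then have "1 < M * 2 ^ K / \<alpha>"
    using alpha by (simp add: less_divide_eq)
  then show "0 \<le> chernoff_level" "exp (- chernoff_level) = \<alpha> / (M * 2 ^ K)"
    by (simp_all add: chernoff_level_def exp_minus)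
qed

lemma eps_eq_chernoff_level:
  "0 < N \<Longrightarrow> eps M K \<alpha> N = 2 * sqrt (real N * chernoff_level / 2) / N"
  by (simp add: two_sqrt_half_div_eq eps_def chernoff_level_def)

text \<open>
  The conjunct \<open>0 < bin_prob m\<close> excludes the junk value of \<open>pi_true\<close> (division by zero) on
  null bins; these are almost surely empty.
\<close>

definition accurate_bin :: "(nat \<Rightarrow> 'x \<times> nat) \<Rightarrow> nat \<Rightarrow> bool" where
  "accurate_bin \<omega> m \<longleftrightarrow> (0 < bin_count g n \<omega> m \<longrightarrow>
     0 < bin_prob m \<and> l1dist K (pi_hat g K n \<omega> m) (pi_true P g K m) \<le> eps M K \<alpha> (bin_count g n \<omega> m))"

lemma sets_Collect_not_accurate_bin: "{\<omega>\<in>space Q. \<not> accurate_bin \<omega> m} \<in> sets Q"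
  using sets_Collect_bin_statistics[of "\<lambda>N _ u _. \<not> (0 < N m \<longrightarrow>
     0 < bin_prob m \<and> l1dist K (u m) (pi_true P g K m) \<le> eps M K \<alpha> (N m))"]
  by (simp add: accurate_bin_def)

lemma prob_not_accurate_null_bin:
  assumes "bin_prob m = 0"
  shows "measure Q {\<omega>\<in>space Q. \<not> accurate_bin \<omega> m} = 0"
proof -
  have "{p\<in>space P. g (fst p) = m} \<in> sets P"
    using sets_Collect_bin_label[of "\<lambda>a _. a = m"] by simp
  then have "AE \<omega> in Q. \<forall>i\<in>{1..n}. \<omega> i \<notin> {p\<in>space P. g (fst p) = m}"
    using assms by (intro P.AE_PiM_avoids_null_event) auto
  then have "AE \<omega> in Q. accurate_bin \<omega> m"
    using AE_space
  proof eventually_elim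
    case (elim \<omega>)
    then have "bin_count g n \<omega> m = 0"
      using sample_in_space[of \<omega>] by (auto simp: bin_count_def)
    then show ?case
      by (simp add: accurate_bin_def)
  qed
  then have "emeasure Q {\<omega>\<in>space Q. \<not> accurate_bin \<omega> m} = 0"
    using AE_iff_measurable[OF sets_Collect_not_accurate_bin refl] by simp
  then show ?thesis
    by (simp add: measure_def)
qed

lemma not_accurate_bin_subset_deviation_events:
  assumes q: "0 < bin_prob m"
  shows "{\<omega>\<in>space Q. \<not> accurate_bin \<omega> m} \<subseteq> (\<Union>S\<in>Pow {1..K}. deviation_event chernoff_level m S)"
proof
  fix \<omega> assume "\<omega> \<in> {\<omega>\<in>space Q. \<not> accurate_bin \<omega> m}"
  then have \<omega>: "\<omega> \<in> space Q" and N: "0 < bin_count g n \<omega> m"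
    and far: "eps M K \<alpha> (bin_count g n \<omega> m) < l1dist K (pi_hat g K n \<omega> m) (pi_true P g K m)"
    using q by (auto simp: accurate_bin_def)
  show "\<omega> \<in> (\<Union>S\<in>Pow {1..K}. deviation_event chernoff_level m S)"
  proof (rule ccontr)
    assume notin: "\<omega> \<notin> (\<Union>S\<in>Pow {1..K}. deviation_event chernoff_level m S)"
    have "real (label_count \<omega> m S) - real (bin_count g n \<omega> m) * label_prob m S
        \<le> sqrt (real (bin_count g n \<omega> m) * chernoff_level / 2)" if "S \<subseteq> {1..K}" for S
    proof -
      have "\<omega> \<notin> deviation_event chernoff_level m S"
        using notin that by blast
      then show ?thesis
        using \<omega> N by (auto simp: deviation_event_def)
    qed
    then have "l1dist K (pi_hat g K n \<omega> m) (pi_true P g K m) \<le> eps M K \<alpha> (bin_count g n \<omega> m)"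
      using l1dist_pi_hat_le[OF \<omega> N q] N by (simp add: eps_eq_chernoff_level)
    then show False
      using far by simp
  qed
qed

lemma prob_not_accurate_bin_le: "measure Q {\<omega>\<in>space Q. \<not> accurate_bin \<omega> m} \<le> \<alpha> / M"
proof (cases "bin_prob m = 0")
  case True
  then show ?thesis
    using prob_not_accurate_null_bin[OF True] alpha by simp
next
  case False
  then have q: "0 < bin_prob m"
    by (simp add: less_le)
  have "measure Q {\<omega>\<in>space Q. \<not> accurate_bin \<omega> m}
      \<le> measure Q (\<Union>S\<in>Pow {1..K}. deviation_event chernoff_level m S)"
    using not_accurate_bin_subset_deviation_events[OF q] sets_deviation_event
    by (intro Q.finite_measure_mono) auto
  also have "\<dots> \<le> (\<Sum>S\<in>Pow {1..K}. measure Q (deviation_event chernoff_level m S))"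
    using sets_deviation_event by (intro measure_UNION_le) auto
  also have "\<dots> \<le> (\<Sum>S\<in>Pow {1..K}. exp (- chernoff_level))"
    using prob_deviation_event_le[OF q chernoff_level_nonneg] by (intro sum_mono)
  also have "\<dots> = \<alpha> / M"
    using M_pos by (simp add: card_Pow exp_neg_chernoff_level)
  finally show ?thesis .
qed

lemma prob_all_bins_accurate: "1 - \<alpha> \<le> measure Q {\<omega>\<in>space Q. \<forall>m\<in>{1..M}. accurate_bin \<omega> m}"
proof -
  let ?bad = "\<Union>m\<in>{1..M}. {\<omega>\<in>space Q. \<not> accurate_bin \<omega> m}"
  have bad_sets: "?bad \<in> sets Q"
    using sets_Collect_not_accurate_bin by auto
  have "measure Q ?bad \<le> (\<Sum>m\<in>{1..M}. measure Q {\<omega>\<in>space Q. \<not> accurate_bin \<omega> m})"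
    using sets_Collect_not_accurate_bin by (intro measure_UNION_le) auto
  also have "\<dots> \<le> (\<Sum>m\<in>{1..M}. \<alpha> / M)"
    by (intro sum_mono prob_not_accurate_bin_le)
  also have "\<dots> = \<alpha>"
    using M_pos by simp
  finally have "measure Q ?bad \<le> \<alpha>" .
  moreover have "{\<omega>\<in>space Q. \<forall>m\<in>{1..M}. accurate_bin \<omega> m} = space Q - ?bad"
    by auto
  ultimately show ?thesis
    using Q.prob_compl[OF bad_sets] by simp
qed

definition level_bins :: "(nat \<Rightarrow> 'x \<times> nat) \<Rightarrow> (nat \<Rightarrow> real) \<Rightarrow> nat set" where
  "level_bins \<omega> z = {m\<in>{1..M}. pi_hat g K n \<omega> m = z}"

lemma measure_recal_level_eq_sum:
  "measure P {p\<in>space P. R (snd p) \<and> recal g K n \<omega> (fst p) = z}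
     = (\<Sum>m\<in>level_bins \<omega> z. measure P {p\<in>space P. g (fst p) = m \<and> R (snd p)})"
proof -
  have "{p\<in>space P. R (snd p) \<and> recal g K n \<omega> (fst p) = z}
      = {p\<in>space P. g (fst p) \<in> level_bins \<omega> z \<and> R (snd p)}"
    by (auto simp: level_bins_def recal_def space_P dest: bin_index_range)
  moreover have "{p\<in>space P. g (fst p) = m \<and> R (snd p)} \<in> sets P" for m
    using sets_Collect_bin_label[of "\<lambda>a y. a = m \<and> R y"] by simp
  ultimately show ?thesis
    using P.measure_Collect_mem_eq_sum[of "level_bins \<omega> z" "\<lambda>p. g (fst p)" "\<lambda>p. R (snd p)"]
    by (simp add: level_bins_def)
qed

lemma calibration_error_le:
  assumes acc: "\<And>m. m \<in> {1..M} \<Longrightarrow> 0 < bin_prob m \<and> l1dist K (pi_hat g K n \<omega> m) (pi_true P g K m) \<le> e"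
    and z: "z \<in> recal g K n \<omega> ` space MX"
  shows "(\<Sum>y=1..K. \<bar>measure P {p\<in>space P. snd p = y \<and> recal g K n \<omega> (fst p) = z}
                   / measure P {p\<in>space P. recal g K n \<omega> (fst p) = z} - z y\<bar>) \<le> e"
proof -
  let ?T = "level_bins \<omega> z"
  define den where "den = (\<Sum>m\<in>?T. bin_prob m)"
  obtain x where x: "x \<in> space MX" "z = pi_hat g K n \<omega> (g x)"
    using z by (auto simp: recal_def)
  have T: "finite ?T" "?T \<subseteq> {1..M}" "g x \<in> ?T"
    using x bin_index_range by (auto simp: level_bins_def)
  have "measure P {p\<in>space P. recal g K n \<omega> (fst p) = z} = den"
    using measure_recal_level_eq_sum[of "\<lambda>_. True"] by (simp add: den_def)
  moreover have "0 < den"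
    unfolding den_def using T acc by (intro sum_pos2[of ?T "g x"]) (auto intro: less_imp_le)
  moreover have "measure P {p\<in>space P. snd p = y \<and> recal g K n \<omega> (fst p) = z}
      = (\<Sum>m\<in>?T. bin_prob m * pi_true P g K m y)" if "y \<in> {1..K}" for y
    unfolding measure_recal_level_eq_sum[of "\<lambda>y'. y' = y"]
  proof (intro sum.cong refl)
    fix m assume "m \<in> ?T"
    then have "0 < bin_prob m"
      using T(2) acc by blast
    then show "measure P {p\<in>space P. g (fst p) = m \<and> snd p = y} = bin_prob m * pi_true P g K m y"
      using that by (simp add: pi_true_def conj_commute)
  qed
  ultimately have "(\<Sum>y=1..K. \<bar>measure P {p\<in>space P. snd p = y \<and> recal g K n \<omega> (fst p) = z}
                   / measure P {p\<in>space P. recal g K n \<omega> (fst p) = z} - z y\<bar>)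
      = (\<Sum>y=1..K. \<bar>(\<Sum>m\<in>?T. bin_prob m / den * pi_true P g K m y) - z y\<bar>)"
    by (intro sum.cong refl) (simp add: sum_divide_distrib)
  also have "\<dots> \<le> e"
  proof (rule sum_abs_mixture_diff_le)
    show "(\<Sum>m\<in>?T. bin_prob m / den) = 1"
      using \<open>0 < den\<close> by (simp add: den_def flip: sum_divide_distrib)
    show "(\<Sum>y=1..K. \<bar>pi_true P g K m y - z y\<bar>) \<le> e" if "m \<in> ?T" for m
      using that T(2) acc[of m] by (auto simp: level_bins_def l1dist_def abs_minus_commute)
  qed (use T(1) \<open>0 < den\<close> in auto)
  finally show ?thesis .
qed

lemma calibration_error_le_Max:
  assumes acc: "\<forall>m\<in>{1..M}. accurate_bin \<omega> m" and N: "\<forall>m\<in>{1..M}. 0 < bin_count g n \<omega> m"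
    and z: "z \<in> recal g K n \<omega> ` space MX"
  shows "(\<Sum>y=1..K. \<bar>measure P {p\<in>space P. snd p = y \<and> recal g K n \<omega> (fst p) = z}
                   / measure P {p\<in>space P. recal g K n \<omega> (fst p) = z} - z y\<bar>)
         \<le> Max ((\<lambda>m. eps M K \<alpha> (bin_count g n \<omega> m)) ` {1..M})"
proof (rule calibration_error_le[OF _ z])
  fix m assume m: "m \<in> {1..M}"
  have "eps M K \<alpha> (bin_count g n \<omega> m) \<le> Max ((\<lambda>m. eps M K \<alpha> (bin_count g n \<omega> m)) ` {1..M})"
    using m by (intro Max_ge) auto
  moreover have "accurate_bin \<omega> m" "0 < bin_count g n \<omega> m"
    using acc N m by auto
  ultimately show "0 < bin_prob m \<and> l1dist K (pi_hat g K n \<omega> m) (pi_true P g K m)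
      \<le> Max ((\<lambda>m. eps M K \<alpha> (bin_count g n \<omega> m)) ` {1..M})"
    by (auto simp: accurate_bin_def)
qed

lemma prob_l1dist_pi_hat_le:
  "measure Q {\<omega> \<in> space Q. \<forall>m\<in>{1..M}. bin_count g n \<omega> m > 0 \<longrightarrow>
      l1dist K (pi_hat g K n \<omega> m) (pi_true P g K m) \<le> eps M K \<alpha> (bin_count g n \<omega> m)}
    \<ge> 1 - \<alpha>" (is "measure Q ?G \<ge> _")
proof -
  have "?G \<in> sets Q"
    using sets_Collect_bin_statistics[of "\<lambda>N _ u _. \<forall>m\<in>{1..M}. N m > 0 \<longrightarrow>
      l1dist K (u m) (pi_true P g K m) \<le> eps M K \<alpha> (N m)"] by simp
  moreover have "{\<omega>\<in>space Q. \<forall>m\<in>{1..M}. accurate_bin \<omega> m} \<subseteq> ?G"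
    by (auto simp: accurate_bin_def)
  ultimately show ?thesis
    using prob_all_bins_accurate Q.finite_measure_mono by (meson order_trans)
qed

lemma prob_calibration_error_le:
  "measure Q {\<omega> \<in> space Q. (\<forall>m\<in>{1..M}. bin_count g n \<omega> m > 0) \<longrightarrow>
      (\<forall>z\<in>recal g K n \<omega> ` space MX.
         (\<Sum>y=1..K. \<bar>measure P {p\<in>space P. snd p = y \<and> recal g K n \<omega> (fst p) = z}
                     / measure P {p\<in>space P. recal g K n \<omega> (fst p) = z} - z y\<bar>)
         \<le> Max ((\<lambda>m. eps M K \<alpha> (bin_count g n \<omega> m)) ` {1..M}))}
    \<ge> 1 - \<alpha>" (is "measure Q ?G \<ge> _")
proof -
  have "?G \<in> sets Q"
    using sets_Collect_bin_statistics[of "\<lambda>N _ _ h. (\<forall>m\<in>{1..M}. N m > 0) \<longrightarrow>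
      (\<forall>z\<in>h ` space MX.
         (\<Sum>y=1..K. \<bar>measure P {p\<in>space P. snd p = y \<and> h (fst p) = z}
                     / measure P {p\<in>space P. h (fst p) = z} - z y\<bar>)
         \<le> Max ((\<lambda>m. eps M K \<alpha> (N m)) ` {1..M}))"] by simp
  moreover have "{\<omega>\<in>space Q. \<forall>m\<in>{1..M}. accurate_bin \<omega> m} \<subseteq> ?G"
    using calibration_error_le_Max by blast
  ultimately show ?thesis
    using prob_all_bins_accurate Q.finite_measure_mono by (meson order_trans)
qed

end

lemma measurable_bin_index:
  fixes g :: "'x \<Rightarrow> nat"
  assumes "\<And>x. x \<in> space MX \<Longrightarrow> g x \<in> I" and "\<forall>m\<in>I. f -` B m \<inter> space MX \<in> sets MX"
    and "\<forall>x\<in>space MX. \<forall>m\<in>I. g x = m \<longleftrightarrow> f x \<in> B m"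
  shows "g \<in> MX \<rightarrow>\<^sub>M count_space UNIV"
proof (subst measurable_count_space_eq2_countable, safe)
  fix m
  show "g -` {m} \<inter> space MX \<in> sets MX"
  proof (cases "m \<in> I")
    case True
    then have "g -` {m} \<inter> space MX = f -` B m \<inter> space MX"
      using assms(3) by blast
    then show ?thesis
      using assms(2) True by simp
  next
    case False
    then have "g -` {m} \<inter> space MX = {}"
      using assms(1) by blast
    then show ?thesis
      by simp
  qed
qed auto

theorem theorem3:
  fixes MX :: "'x measure" and P :: "('x \<times> nat) measure"
    and f :: "'x \<Rightarrow> nat \<Rightarrow> real" and B :: "nat \<Rightarrow> (nat \<Rightarrow> real) set"
    and g :: "'x \<Rightarrow> nat" and K M n :: nat and \<alpha> :: real
  assumes K: "K \<ge> 1" and Mpos: "M \<ge> 1"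
    and f_simplex: "\<forall>x\<in>space MX. f x \<in> prob_simplex K"
    and bins_cover: "(\<Union>m\<in>{1..M}. B m) = prob_simplex K"
    and bins_disj: "\<forall>m\<in>{1..M}. \<forall>m'\<in>{1..M}. m \<noteq> m' \<longrightarrow> B m \<inter> B m' = {}"
    and bins_meas: "\<forall>m\<in>{1..M}. f -` B m \<inter> space MX \<in> sets MX"
    and g_def: "\<forall>x\<in>space MX. \<forall>m\<in>{1..M}. g x = m \<longleftrightarrow> f x \<in> B m"
    and P: "prob_space P" and P_sets: "sets P = sets (MX \<Otimes>\<^sub>M count_space {1..K})"
    and alpha: "0 < \<alpha>" "\<alpha> < 1"
  shows
   "measure (PiM {1..n} (\<lambda>_. P))
      {\<omega> \<in> space (PiM {1..n} (\<lambda>_. P)).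
         \<forall>m\<in>{1..M}. bin_count g n \<omega> m > 0 \<longrightarrow>
           l1dist K (pi_hat g K n \<omega> m) (pi_true P g K m) \<le> eps M K \<alpha> (bin_count g n \<omega> m)}
      \<ge> 1 - \<alpha>
  \<and> measure (PiM {1..n} (\<lambda>_. P))
      {\<omega> \<in> space (PiM {1..n} (\<lambda>_. P)).
         (\<forall>m\<in>{1..M}. bin_count g n \<omega> m > 0) \<longrightarrow>
         (\<forall>z\<in>recal g K n \<omega> ` space MX.
            (\<Sum>y=1..K. \<bar>measure P {p\<in>space P. snd p = y \<and> recal g K n \<omega> (fst p) = z}
                        / measure P {p\<in>space P. recal g K n \<omega> (fst p) = z} - z y\<bar>)
            \<le> Max ((\<lambda>m. eps M K \<alpha> (bin_count g n \<omega> m)) ` {1..M}))}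
      \<ge> 1 - \<alpha>"
proof -
  have bin_index_range: "g x \<in> {1..M}" if "x \<in> space MX" for x
  proof -
    have "f x \<in> (\<Union>m\<in>{1..M}. B m)"
      using that f_simplex bins_cover by simp
    then obtain m where "m \<in> {1..M}" "f x \<in> B m"
      by blast
    moreover from this have "g x = m"
      using that g_def by blast
    ultimately show ?thesis
      by simp
  qed
  have "g \<in> MX \<rightarrow>\<^sub>M count_space UNIV"
    using bin_index_range bins_meas g_def by (rule measurable_bin_index)
  then interpret histogram_binning P MX g K M n \<alpha>
    using P P_sets bin_index_range Mpos alpha
    unfolding histogram_binning_def histogram_binning_axioms_def by blast
  show ?thesis
    using prob_l1dist_pi_hat_le prob_calibration_error_le by (rule conjI)
qed

end
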